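(* Let $A$ be a unital associative $\mathbb{K}$-algebra. Then $(T^+(A),\bar\bullet^\ell,P_A)$ is a $TD$-algebra with unit $1_A\otimes 1_{\mathbb{K}}$; that is, for all $x,y\in T^+(A)$, $$P_A(x)\,\bar\bullet^\ell\,P_A(y)=P_A\bigl(x\,\bar\bullet^\ell\,P_A(y)+P_A(x)\,\bar\bullet^\ell\,y-x\,\bar\bullet^\ell\,P_A(1_A)\,\bar\bullet^\ell\,y\bigr),$$ where $P_A(1_A)=1_A\otimes1_A$.
   Context: $\mathbb{K}$ is a field of characteristic $0$, $A$ has product $[a;b]$ and unit $1_A$. $T(A)=\bigoplus_{n\ge0}A^{\otimes n}$ with $A^{\otimes0}=\mathbb{K}1_{\mathbb{K}}$; $a\otimes1_{\mathbb{K}}$ is identified with $a$. The left-shift shuffle $\bullet^\ell$ is the bilinear product on $T(A)$ with $k1_{\mathbb{K}}\bullet^\ell U=kU=U\bullet^\ell k1_{\mathbb{K}}$ and, for $a,b\in A$, $U,V\in T(A)$, $(a\otimes U)\bullet^\ell(b\otimes V)=a\otimes\bigl(U\bullet^\ell(b\otimes V)\bigr)+b\otimes\bigl((a\otimes U)\bullet^\ell V\bigr)-[a;b]\otimes1_A\otimes(U\bullet^\ell V)$; it is associative with unit $1_{\mathbb{K}}$. $T^+(A):=A\otimes T(A)=\bigoplus_{n\ge1}A^{\otimes n}$ with product $(a\otimes U)\,\bar\bullet^\ell\,(b\otimes V):=[a;b]\otimes(U\bullet^\ell V)$ and unit $1_A\otimes1_{\mathbb{K}}$ (identified with $1_A$).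 $P_A:T^+(A)\to T^+(A)$ is the linear map $P_A(a_1\otimes\cdots\otimes a_n)=1_A\otimes a_1\otimes\cdots\otimes a_n$. A $TD$-algebra is a pair $(B,P)$, $B$ a unital associative algebra, $P:B\to B$ linear with $P(x)P(y)=P\bigl(P(x)y+xP(y)\bigr)-P\bigl(x\,P(1_B)\,y\bigr)$ for all $x,y$. *)

theory Defs
  imports Main HOL.Vector_Spaces "HOL-Library.Poly_Mapping"
begin

text \<open>
Model of the tensor algebra T(A) over a field K:
T(A) is the quotient of the free K-vector space on words (lists) of elements of A,
i.e. the type of finitely supported maps from words to K, by the subspace generated by the multilinearity
relations in every tensor slot (see tensor_rel).  A word [a1,...,an] stands for the pure
tensor a1 \<otimes> ... \<otimes> an, and [] stands for 1_K.  All operations are defined on words and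
extended linearly/bilinearly to the free space; equalities in T(A) are equalities modulo
tensor_rel.
\<close>

definition fscale :: "'k::comm_ring_1 \<Rightarrow> ('w \<Rightarrow>\<^sub>0 'k) \<Rightarrow> ('w \<Rightarrow>\<^sub>0 'k)" where
  "fscale c p = Poly_Mapping.map (\<lambda>x. c * x) p"

definition word :: "'w \<Rightarrow> ('w \<Rightarrow>\<^sub>0 'k::comm_ring_1)" where
  "word w = Poly_Mapping.single w 1"

definition linext :: "('w \<Rightarrow> ('v \<Rightarrow>\<^sub>0 'k::comm_ring_1)) \<Rightarrow> ('w \<Rightarrow>\<^sub>0 'k) \<Rightarrow> ('v \<Rightarrow>\<^sub>0 'k)" where
  "linext f p = (\<Sum>u\<in>Poly_Mapping.keys p. fscale (Poly_Mapping.lookup p u) (f u))"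

definition bilext :: "('w \<Rightarrow> 'w \<Rightarrow> ('v \<Rightarrow>\<^sub>0 'k::comm_ring_1)) \<Rightarrow> ('w \<Rightarrow>\<^sub>0 'k) \<Rightarrow> ('w \<Rightarrow>\<^sub>0 'k) \<Rightarrow> ('v \<Rightarrow>\<^sub>0 'k)" where
  "bilext f p q = (\<Sum>u\<in>Poly_Mapping.keys p. \<Sum>v\<in>Poly_Mapping.keys q. fscale (Poly_Mapping.lookup p u * Poly_Mapping.lookup q v) (f u v))"

definition tcons :: "'a \<Rightarrow> ('a list \<Rightarrow>\<^sub>0 'k::comm_ring_1) \<Rightarrow> ('a list \<Rightarrow>\<^sub>0 'k)" where
  "tcons a = linext (\<lambda>u. word (a # u))"

fun wsh :: "('a::ring_1) list \<Rightarrow> 'a list \<Rightarrow> ('a list \<Rightarrow>\<^sub>0 'k::comm_ring_1)" where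
  "wsh [] V = word V"
| "wsh U [] = word U"
| "wsh (a # U) (b # V) =
     tcons a (wsh U (b # V)) + tcons b (wsh (a # U) V) - tcons (a * b) (tcons 1 (wsh U V))"

definition lsh :: "('a::ring_1 list \<Rightarrow>\<^sub>0 'k::comm_ring_1) \<Rightarrow> ('a list \<Rightarrow>\<^sub>0 'k) \<Rightarrow> ('a list \<Rightarrow>\<^sub>0 'k)" where
  "lsh = bilext wsh"

text \<open>the product on T^+(A) on words: (a\<otimes>U) bar (b\<otimes>V) = [a;b] \<otimes> (U \<bullet> V)
  (the value on the empty word is irrelevant, T^+(A) has no length-0 component)\<close>
fun wbar :: "('a::ring_1) list \<Rightarrow> 'a list \<Rightarrow> ('a list \<Rightarrow>\<^sub>0 'k::comm_ring_1)" where
  "wbar (a # U) (b # V) = tcons (a * b) (wsh U V)"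
| "wbar _ _ = 0"

definition lbar :: "('a::ring_1 list \<Rightarrow>\<^sub>0 'k::comm_ring_1) \<Rightarrow> ('a list \<Rightarrow>\<^sub>0 'k) \<Rightarrow> ('a list \<Rightarrow>\<^sub>0 'k)" where
  "lbar = bilext wbar"

definition PA :: "('a::ring_1 list \<Rightarrow>\<^sub>0 'k::comm_ring_1) \<Rightarrow> ('a list \<Rightarrow>\<^sub>0 'k)" where
  "PA = tcons 1"

text \<open>the subspace of multilinearity relations; scale is the K-action on A\<close>
inductive_set tensor_rel :: "('k::comm_ring_1 \<Rightarrow> 'a::plus \<Rightarrow> 'a) \<Rightarrow> ('a list \<Rightarrow>\<^sub>0 'k) set"
  for scale where
  zero: "0 \<in> tensor_rel scale"
| add_gen: "word (u @ (a + b) # v) - word (u @ a # v) - word (u @ b # v) \<in> tensor_rel scale"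
| smul_gen: "word (u @ scale c a # v) - fscale c (word (u @ a # v)) \<in> tensor_rel scale"
| plus: "p \<in> tensor_rel scale \<Longrightarrow> q \<in> tensor_rel scale \<Longrightarrow> p + q \<in> tensor_rel scale"
| cmul: "p \<in> tensor_rel scale \<Longrightarrow> fscale c p \<in> tensor_rel scale"

definition teq :: "('k::comm_ring_1 \<Rightarrow> 'a::plus \<Rightarrow> 'a) \<Rightarrow> ('a list \<Rightarrow>\<^sub>0 'k) \<Rightarrow> ('a list \<Rightarrow>\<^sub>0 'k) \<Rightarrow> bool" where
  "teq scale p q \<longleftrightarrow> p - q \<in> tensor_rel scale"

definition in_Tplus :: "('a list \<Rightarrow>\<^sub>0 'k::zero) \<Rightarrow> bool" where
  "in_Tplus p \<longleftrightarrow> [] \<notin> Poly_Mapping.keys p"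

end

theory Submission
  imports Defs
begin

text \<open>
  Both sides of the identity are bilinear in \<open>x\<close> and \<open>y\<close>, so it suffices to check it on pure
  tensors \<open>x = a \<otimes> U\<close>, \<open>y = b \<otimes> V\<close>. There \<open>U \<bullet> 1\<^sub>A = 1\<^sub>A \<otimes> U\<close> and
  \<open>(1\<^sub>A \<otimes> U) \<bullet> V = 1\<^sub>A \<otimes> (U \<bullet> V)\<close>, and after applying \<open>P\<^sub>A\<close> the right-hand side becomes
  \<open>1\<^sub>A \<otimes> ((a \<otimes> U) \<bullet> (b \<otimes> V))\<close> expanded by the defining recursion of the left-shift shuffle,
  which is the left-hand side. The identity therefore already holds for the free vector space
  on words, before passing to the quotient by the multilinearity relations.
\<close>

lemma lookup_fscale [simp]: "Poly_Mapping.lookup (fscale c p) k = c * Poly_Mapping.lookup p k"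
  by (simp add: fscale_def Poly_Mapping.map.rep_eq when_def)

lemma fscale_add: "fscale c (p + q) = fscale c p + fscale c q"
  by (rule poly_mapping_eqI) (simp add: lookup_add distrib_left)

lemma fscale_diff: "fscale c (p - q) = fscale c p - fscale c q"
  by (rule poly_mapping_eqI) (simp add: lookup_minus right_diff_distrib)

lemma fscale_add_left: "fscale (a + b) p = fscale a p + fscale b p"
  by (rule poly_mapping_eqI) (simp add: lookup_add distrib_right)

lemma fscale_fscale: "fscale a (fscale b p) = fscale (a * b) p"
  by (rule poly_mapping_eqI) (simp add: mult.assoc)

lemma fscale_sum: "fscale c (sum g S) = (\<Sum>x\<in>S. fscale c (g x))"
  by (rule poly_mapping_eqI) (simp add: lookup_sum sum_distrib_left)

lemma fscale_one [simp]: "fscale 1 p = p"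
  by (rule poly_mapping_eqI) simp

lemma fscale_zero [simp]: "fscale 0 p = 0"
  by (rule poly_mapping_eqI) simp

lemma lookup_word_self [simp]: "Poly_Mapping.lookup (word u :: _ \<Rightarrow>\<^sub>0 'k::comm_ring_1) u = 1"
  by (simp add: word_def)

lemma keys_word [simp]: "Poly_Mapping.keys (word u :: _ \<Rightarrow>\<^sub>0 'k::comm_ring_1) = {u}"
  by (simp add: word_def)

lemma poly_mapping_sum_words:
  "p = (\<Sum>u\<in>Poly_Mapping.keys p. fscale (Poly_Mapping.lookup p u) (word u))"
proof -
  have lookup_partial_sum: "finite I \<Longrightarrow>
      Poly_Mapping.lookup (\<Sum>i\<in>I. fscale (Poly_Mapping.lookup p i) (word i)) j =
      (if j \<in> I then Poly_Mapping.lookup p j else 0)" for I j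
    by (induction I rule: finite_induct) (auto simp: word_def lookup_single lookup_add when_def)
  show ?thesis
    by (rule poly_mapping_eqI) (fastforce simp add: in_keys_iff lookup_partial_sum)
qed

lemma linext_superset:
  assumes "finite S" "Poly_Mapping.keys p \<subseteq> S"
  shows "linext f p = (\<Sum>u\<in>S. fscale (Poly_Mapping.lookup p u) (f u))"
  unfolding linext_def
  by (rule sum.mono_neutral_left) (use assms in \<open>auto simp: in_keys_iff\<close>)

lemma linext_add: "linext f (p + q) = linext f p + linext f q"
proof -
  let ?S = "Poly_Mapping.keys p \<union> Poly_Mapping.keys q"
  have "linext f (p + q) = (\<Sum>u\<in>?S. fscale (Poly_Mapping.lookup (p + q) u) (f u))"
    by (rule linext_superset) (auto simp: keys_add)
  also have "\<dots> = (\<Sum>u\<in>?S. fscale (Poly_Mapping.lookup p u) (f u))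
                 + (\<Sum>u\<in>?S. fscale (Poly_Mapping.lookup q u) (f u))"
    by (simp add: lookup_add fscale_add_left sum.distrib)
  also have "\<dots> = linext f p + linext f q"
    by (simp add: linext_superset[symmetric])
  finally show ?thesis .
qed

lemma linext_fscale: "linext f (fscale c p) = fscale c (linext f p)"
proof -
  have "linext f (fscale c p) =
      (\<Sum>u\<in>Poly_Mapping.keys p. fscale (Poly_Mapping.lookup (fscale c p) u) (f u))"
    by (rule linext_superset) (auto simp: in_keys_iff)
  also have "\<dots> = fscale c (linext f p)"
    by (simp add: linext_def fscale_sum fscale_fscale)
  finally show ?thesis .
qed

lemma linext_word [simp]: "linext f (word u) = f u"
  by (simp add: linext_def)

lemma bilext_eq_linext_left: "bilext f p q = linext (\<lambda>u. linext (f u) q) p"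
  by (simp add: bilext_def linext_def fscale_sum fscale_fscale)

lemma bilext_eq_linext_right: "bilext f p q = linext (\<lambda>v. linext (\<lambda>u. f u v) p) q"
  unfolding bilext_def linext_def fscale_sum fscale_fscale
  by (subst sum.swap) (simp add: mult.commute)

definition fs_linear :: "(('w \<Rightarrow>\<^sub>0 'k::comm_ring_1) \<Rightarrow> ('v \<Rightarrow>\<^sub>0 'k)) \<Rightarrow> bool" where
  "fs_linear F \<longleftrightarrow> (\<forall>p q. F (p + q) = F p + F q) \<and> (\<forall>c p. F (fscale c p) = fscale c (F p))"

lemma fs_linear_addD: "fs_linear F \<Longrightarrow> F (p + q) = F p + F q"
  by (simp add: fs_linear_def)

lemma fs_linear_diffD: "fs_linear F \<Longrightarrow> F (p - q) = F p - F q"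
  using fs_linear_addD[of F "p - q" q] by (simp add: eq_diff_eq)

lemma fs_linear_linext: "fs_linear (linext f)"
  by (simp add: fs_linear_def linext_add linext_fscale)

lemma fs_linear_compose: "fs_linear F \<Longrightarrow> fs_linear G \<Longrightarrow> fs_linear (\<lambda>x. F (G x))"
  by (simp add: fs_linear_def)

lemma fs_linear_add: "fs_linear F \<Longrightarrow> fs_linear G \<Longrightarrow> fs_linear (\<lambda>x. F x + G x)"
  by (simp add: fs_linear_def fscale_add)

lemma fs_linear_diff: "fs_linear F \<Longrightarrow> fs_linear G \<Longrightarrow> fs_linear (\<lambda>x. F x - G x)"
  by (simp add: fs_linear_def fscale_diff)

lemma fs_linear_sum:
  assumes "fs_linear F" "finite S"
  shows "F (sum g S) = (\<Sum>x\<in>S. F (g x))"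
proof -
  have F_zero: "F 0 = 0"
    using fs_linear_diffD[OF assms(1), of 0 0] by simp
  from assms(2) show ?thesis
    by (induction S rule: finite_induct) (simp_all add: F_zero fs_linear_addD[OF assms(1)])
qed

lemma fs_linear_eq_linext:
  assumes "fs_linear F"
  shows "F p = linext (\<lambda>u. F (word u)) p"
proof -
  have "F p = F (\<Sum>u\<in>Poly_Mapping.keys p. fscale (Poly_Mapping.lookup p u) (word u))"
    by (subst poly_mapping_sum_words) (rule refl)
  also have "\<dots> = linext (\<lambda>u. F (word u)) p"
    using assms by (simp add: fs_linear_sum linext_def fs_linear_def)
  finally show ?thesis .
qed

lemma fs_linear_eqI:
  assumes "fs_linear F" "fs_linear G"
    and "\<And>u. u \<in> Poly_Mapping.keys p \<Longrightarrow> F (word u) = G (word u)"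
  shows "F p = G p"
proof -
  have "F p = linext (\<lambda>u. F (word u)) p"
    by (rule fs_linear_eq_linext[OF assms(1)])
  also have "\<dots> = linext (\<lambda>u. G (word u)) p"
    by (simp add: linext_def assms(3))
  also have "\<dots> = G p"
    by (rule fs_linear_eq_linext[OF assms(2), symmetric])
  finally show ?thesis .
qed

lemma fs_bilinear_eqI:
  assumes "\<And>q. fs_linear (\<lambda>p. F p q)" "\<And>q. fs_linear (\<lambda>p. G p q)"
    and "\<And>p. fs_linear (F p)" "\<And>p. fs_linear (G p)"
    and "\<And>u v. u \<in> Poly_Mapping.keys p \<Longrightarrow> v \<in> Poly_Mapping.keys q \<Longrightarrow>
           F (word u) (word v) = G (word u) (word v)"
  shows "F p q = G p q"
proof (rule fs_linear_eqI[where F = "\<lambda>p. F p q" and G = "\<lambda>p. G p q"])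
  fix u
  assume "u \<in> Poly_Mapping.keys p"
  then show "F (word u) q = G (word u) q"
    by (rule fs_linear_eqI[OF assms(3,4) assms(5)])
qed (fact assms)+

lemma fs_linear_tcons: "fs_linear (tcons a)"
  unfolding tcons_def by (rule fs_linear_linext)

lemma fs_linear_PA: "fs_linear PA"
  unfolding PA_def by (rule fs_linear_tcons)

lemma fs_linear_lbar_left: "fs_linear (\<lambda>p. lbar p q)"
  unfolding lbar_def bilext_eq_linext_left by (rule fs_linear_linext)

lemma fs_linear_lbar_right: "fs_linear (lbar p)"
  unfolding lbar_def bilext_eq_linext_right by (rule fs_linear_linext)

lemma tcons_add [simp]: "tcons a (p + q) = tcons a p + tcons a q"
  by (rule fs_linear_addD[OF fs_linear_tcons])

lemma tcons_diff [simp]: "tcons a (p - q) = tcons a p - tcons a q"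
  by (rule fs_linear_diffD[OF fs_linear_tcons])

lemma tcons_word [simp]: "tcons a (word u) = word (a # u)"
  by (simp add: tcons_def)

lemma lbar_word [simp]: "lbar (word u) (word v) = wbar u v"
  by (simp add: lbar_def bilext_def)

lemma wsh_Nil_right [simp]: "wsh U [] = word U"
  by (cases U) simp_all

lemma wsh_one_right: "wsh U [1] = word (1 # U)"
  by (induction U) simp_all

lemma wsh_one_Cons_left: "wsh (1 # U) V = tcons 1 (wsh U V)"
  by (induction V) simp_all

lemma PA_lbar_identity_word:
  "lbar (PA (word (a # U))) (PA (word (b # V))) =
     PA (lbar (word (a # U)) (PA (word (b # V))) + lbar (PA (word (a # U))) (word (b # V))
         - lbar (lbar (word (a # U)) (PA (word [1]))) (word (b # V)))"
  by (simp add: PA_def wsh_one_right wsh_one_Cons_left)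

theorem proposition4p7:
  fixes scale :: "'k::field_char_0 \<Rightarrow> 'a::ring_1 \<Rightarrow> 'a"
    and x y :: "'a list \<Rightarrow>\<^sub>0 'k"
  assumes "vector_space scale"
    and "\<And>c a b. scale c (a * b) = scale c a * b"
    and "\<And>c a b. scale c (a * b) = a * scale c b"
    and "in_Tplus x" and "in_Tplus y"
  shows "teq scale (lbar (PA x) (PA y))
           (PA (lbar x (PA y) + lbar (PA x) y
                - lbar (lbar x (PA (word [1]))) y))"
proof -
  have "lbar (PA x) (PA y) =
      PA (lbar x (PA y) + lbar (PA x) y - lbar (lbar x (PA (word [1]))) y)"
  proof (rule fs_bilinear_eqI[where F = "\<lambda>x y. lbar (PA x) (PA y)"
        and G = "\<lambda>x y. PA (lbar x (PA y) + lbar (PA x) y - lbar (lbar x (PA (word [1]))) y)"])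
    fix u v
    assume "u \<in> Poly_Mapping.keys x" "v \<in> Poly_Mapping.keys y"
    then obtain a U b V where "u = a # U" "v = b # V"
      using \<open>in_Tplus x\<close> \<open>in_Tplus y\<close> unfolding in_Tplus_def by (metis list.exhaust)
    then show "lbar (PA (word u)) (PA (word v)) =
        PA (lbar (word u) (PA (word v)) + lbar (PA (word u)) (word v)
            - lbar (lbar (word u) (PA (word [1]))) (word v))"
      by (simp only: PA_lbar_identity_word)
  qed (intro fs_linear_compose[OF fs_linear_PA] fs_linear_add fs_linear_diff
      fs_linear_compose[OF fs_linear_lbar_left] fs_linear_compose[OF fs_linear_lbar_right]
      fs_linear_PA fs_linear_lbar_left fs_linear_lbar_right)+
  then show ?thesis
    unfolding teq_def by (simp add: tensor_rel.zero)
qed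

end
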